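(* Let $P \subset \mathbb{R}^d$ be a smooth $d$-dimensional prismatoid whose bottom lies in the hyperplane $\{x \in \mathbb{R}^d : x_d = b\}$ and whose top lies in the hyperplane $\{x : x_d = b+h\}$, where $b$ is an integer and $h$ is a positive integer. Then every slice $S_l = P \cap \{x : x_d = b + l\}$, $l = 0,1,\dots,h$, is a lattice polytope of dimension $d-1$ which is Minkowski equivalent to the bottom of $P$ (and hence also to the top of $P$).
   Context: A lattice polytope is the convex hull of finitely many points of $\mathbb{Z}^d$. A $d$-dimensional polytope is simple if each vertex lies in exactly $d$ edges; the primitive edge directions at a vertex are the smallest lattice vectors along its incident edges; a $d$-dimensional lattice polytope in $\mathbb{R}^d$ is smooth if it is simple and at every vertex the primitive edge directions form a basis of $\mathbb{Z}^d$. A $d$-dimensional prism is a polytope affinely equivalent to $Q \times [0,1]$ for some $(d-1)$-dimensional polytope $Q$, with top and bottom facets the images of $Q\times\{1\}$ and $Q\times\{0\}$. A prismatoid is a polytope whose face lattice is isomorphic to that of a prism and such that the facets corresponding to the top and bottom facets (its top and bottom) are parallel, i.e. the linear subspaces parallel to their affine hulls coincide. Two polytopes are Minkowski equivalent if they have the same normal fan. *)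

theory Defs
  imports "HOL-Analysis.Analysis"
begin

definition lattice_pt :: "real^'d \<Rightarrow> bool" where
  "lattice_pt x \<longleftrightarrow> (\<forall>i. x $ i \<in> \<int>)"

definition lattice_polytope :: "(real^'d) set \<Rightarrow> bool" where
  "lattice_polytope P \<longleftrightarrow> (\<exists>V. finite V \<and> (\<forall>v\<in>V. lattice_pt v) \<and> P = convex hull V)"

definition is_vertex :: "(real^'d) set \<Rightarrow> real^'d \<Rightarrow> bool" where
  "is_vertex P v \<longleftrightarrow> {v} face_of P"

definition is_edge :: "(real^'d) set \<Rightarrow> (real^'d) set \<Rightarrow> bool" where
  "is_edge P e \<longleftrightarrow> e face_of P \<and> aff_dim e = 1"

definition edges_at :: "(real^'d) set \<Rightarrow> real^'d \<Rightarrow> (real^'d) set set" where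
  "edges_at P v = {e. is_edge P e \<and> v \<in> e}"

definition simple_polytope :: "(real^'d) set \<Rightarrow> bool" where
  "simple_polytope P \<longleftrightarrow> polytope P \<and> aff_dim P = int CARD('d) \<and>
     (\<forall>v. is_vertex P v \<longrightarrow> card (edges_at P v) = CARD('d))"

definition prim_dir :: "real^'d \<Rightarrow> (real^'d) set \<Rightarrow> real^'d \<Rightarrow> bool" where
  "prim_dir v e u \<longleftrightarrow> u \<noteq> 0 \<and> lattice_pt u \<and> (\<exists>t>0. v + t *\<^sub>R u \<in> e) \<and>
     (\<forall>s. 0 < s \<and> s < 1 \<longrightarrow> \<not> lattice_pt (s *\<^sub>R u))"

definition lattice_basis :: "(real^'d) set \<Rightarrow> bool" where
  "lattice_basis U \<longleftrightarrow> finite U \<and> card U = CARD('d) \<and> independent U \<and> (\<forall>u\<in>U. lattice_pt u) \<and>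
     (\<forall>z. lattice_pt z \<longrightarrow> (\<exists>c. (\<forall>u\<in>U. c u \<in> \<int>) \<and> z = (\<Sum>u\<in>U. c u *\<^sub>R u)))"

definition smooth_polytope :: "(real^'d) set \<Rightarrow> bool" where
  "smooth_polytope P \<longleftrightarrow> lattice_polytope P \<and> simple_polytope P \<and>
     (\<forall>v. is_vertex P v \<longrightarrow>
        (\<exists>dir. (\<forall>e\<in>edges_at P v. prim_dir v e (dir e)) \<and> inj_on dir (edges_at P v) \<and>
               lattice_basis (dir ` edges_at P v)))"

(* the standard prism over Q (a (d-1)-polytope in the coordinate hyperplane x_j = 0):
   Q + [0, e_j], which is affinely equivalent to Q \<times> [0,1] *)
definition std_prism :: "(real^'d) set \<Rightarrow> 'd \<Rightarrow> (real^'d) set" where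
  "std_prism Q j = {q + t *\<^sub>R axis j 1 | q t. q \<in> Q \<and> 0 \<le> t \<and> t \<le> 1}"

definition lin_dir :: "(real^'d) set \<Rightarrow> (real^'d) set" where
  "lin_dir S = {x - y | x y. x \<in> affine hull S \<and> y \<in> affine hull S}"

(* P is a prismatoid with bottom B and top T: the face lattice of P is isomorphic
   to that of a prism Q \<times> [0,1] with B, T corresponding to Q\<times>{0}, Q\<times>{1};
   and B, T are parallel *)
definition prismatoid :: "(real^'d) set \<Rightarrow> (real^'d) set \<Rightarrow> (real^'d) set \<Rightarrow> bool" where
  "prismatoid P B T \<longleftrightarrow> polytope P \<and> aff_dim P = int CARD('d) \<and>
     (\<exists>(Q::(real^'d) set) (j::'d) f. polytope Q \<and> aff_dim Q = int CARD('d) - 1 \<and> Q \<subseteq> {x. x $ j = 0} \<and>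
        bij_betw f {F. F face_of P} {G. G face_of std_prism Q j} \<and>
        (\<forall>F F'. F face_of P \<longrightarrow> F' face_of P \<longrightarrow> (F \<subseteq> F' \<longleftrightarrow> f F \<subseteq> f F')) \<and>
        B face_of P \<and> T face_of P \<and>
        f B = Q \<and> f T = (\<lambda>q. q + axis j 1) ` Q) \<and>
     lin_dir B = lin_dir T"

definition normal_cone :: "(real^'d) set \<Rightarrow> (real^'d) set \<Rightarrow> (real^'d) set" where
  "normal_cone P F = {c. \<forall>x\<in>F. \<forall>y\<in>P. inner c y \<le> inner c x}"

definition normal_fan :: "(real^'d) set \<Rightarrow> (real^'d) set set" where
  "normal_fan P = {normal_cone P F | F. F face_of P \<and> F \<noteq> {}}"

definition minkowski_equiv :: "(real^'d) set \<Rightarrow> (real^'d) set \<Rightarrow> bool" where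
  "minkowski_equiv P Q \<longleftrightarrow> normal_fan P = normal_fan Q"

end

theory Submission
  imports Defs
begin

text \<open>
  The face-lattice isomorphism with the prism sends vertices of \<open>P\<close> to vertices of the prism, so
  every vertex of \<open>P\<close> lies in \<open>B\<close> or in \<open>T\<close>. Hence \<open>P = conv (B \<union> T)\<close>, and the slice at height
  \<open>b + l\<close> is the Minkowski combination \<open>(1 - l/h) B + (l/h) T\<close>.

  Tilting a linear functional \<open>c\<close> along \<open>e\<^sub>k\<close> produces a face of \<open>P\<close> that meets \<open>B\<close> and \<open>T\<close> exactly
  in their \<open>c\<close>-maximal faces. In the prism the top of such a face is the translate of its bottom, so
  the \<open>c\<close>-maximal faces of \<open>B\<close> and \<open>T\<close> correspond under the isomorphism: \<open>B\<close> and \<open>T\<close> have the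
  same normal fan, and then so does every Minkowski combination of them.

  A vertex of the slice is \<open>(1 - l/h) v + (l/h) w\<close> for the \<open>c\<close>-maximal vertices \<open>v\<close> of \<open>B\<close> and \<open>w\<close>
  of \<open>T\<close>, which are joined by an edge of \<open>P\<close>. Any other edge at \<open>v\<close> leaving \<open>B\<close> would also end
  at \<open>w\<close>, so all other edges at \<open>v\<close> lie in \<open>B\<close>. Smoothness at \<open>v\<close> then forces the primitive
  direction \<open>u\<close> of \<open>[v, w]\<close> to have \<open>k\<close>-th coordinate \<open>1\<close>, i.e. \<open>w = v + h u\<close>, and the vertex of the
  slice is the lattice point \<open>v + l u\<close>.
\<close>

definition maximizers :: "'a::real_inner set \<Rightarrow> 'a \<Rightarrow> 'a set" where
  "maximizers X c = {x\<in>X. \<forall>y\<in>X. inner c y \<le> inner c x}"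

lemma maximizers_subset: "maximizers X c \<subseteq> X"
  by (auto simp: maximizers_def)

lemma maximizers_le: "x \<in> maximizers X c \<Longrightarrow> y \<in> X \<Longrightarrow> inner c y \<le> inner c x"
  by (auto simp: maximizers_def)

lemma maximizersI: "x \<in> X \<Longrightarrow> (\<And>y. y \<in> X \<Longrightarrow> inner c y \<le> inner c x) \<Longrightarrow> x \<in> maximizers X c"
  by (auto simp: maximizers_def)

lemma maximizers_nonempty:
  fixes X :: "'a::euclidean_space set"
  assumes "compact X" "X \<noteq> {}"
  shows "maximizers X c \<noteq> {}"
proof -
  have "continuous_on X (inner c)" by (intro continuous_intros)
  then show ?thesis
    using continuous_attains_sup[OF assms] by (auto simp: maximizers_def)
qed

lemma maximizers_face_of:
  assumes "convex X"
  shows "maximizers X c face_of X"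
proof (cases "maximizers X c = {}")
  case False
  then obtain x0 where x0: "x0 \<in> maximizers X c" by auto
  then have "maximizers X c = X \<inter> {x. inner c x = inner c x0}"
    by (auto simp: maximizers_def intro: order.antisym)
  moreover have "X \<inter> {x. inner c x = inner c x0} face_of X"
    using x0 by (intro face_of_Int_supporting_hyperplane_le[OF assms]) (auto simp: maximizers_def)
  ultimately show ?thesis by simp
qed simp

lemma maximizers_shift:
  assumes "\<And>x. x \<in> X \<Longrightarrow> inner c' x = inner c x + r"
  shows "maximizers X c' = maximizers X c"
  using assms by (auto simp: maximizers_def)

lemma maximizers_Int_subset:
  assumes "Y \<subseteq> X" "y \<in> Y" "y \<in> maximizers X c"
  shows "maximizers X c \<inter> Y = maximizers Y c"
  using assms by (fastforce simp: maximizers_def intro: order.antisym)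

lemma exposed_face_eq_maximizers:
  fixes X :: "'a::euclidean_space set"
  assumes "polytope X" "F face_of X" "F \<noteq> {}"
  obtains c where "F = maximizers X c"
proof -
  have "F exposed_face_of X"
    using assms exposed_face_of_polyhedron polytope_imp_polyhedron by blast
  then obtain a b where ab: "X \<subseteq> {x. a \<bullet> x \<le> b}" "F = X \<inter> {x. a \<bullet> x = b}"
    unfolding exposed_face_of_def by blast
  with \<open>F \<noteq> {}\<close> have "F = maximizers X a"
    by (auto simp: maximizers_def) fastforce
  then show thesis by (rule that)
qed

lemma normal_fan_eq_maximizer_cones:
  assumes "polytope X" "X \<noteq> {}"
  shows "normal_fan X = range (\<lambda>c. {c'. maximizers X c \<subseteq> maximizers X c'})"
proof -
  have cone: "normal_cone X (maximizers X c) = {c'. maximizers X c \<subseteq> maximizers X c'}" for c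
    unfolding normal_cone_def maximizers_def by auto
  have "normal_fan X = range (\<lambda>c. normal_cone X (maximizers X c))"
    unfolding normal_fan_def
  proof (intro set_eqI iffI)
    fix N assume "N \<in> {normal_cone X F |F. F face_of X \<and> F \<noteq> {}}"
    then obtain F where "N = normal_cone X F" "F face_of X" "F \<noteq> {}" by blast
    then show "N \<in> range (\<lambda>c. normal_cone X (maximizers X c))"
      using exposed_face_eq_maximizers[OF assms(1)] by (metis rangeI)
  next
    fix N assume "N \<in> range (\<lambda>c. normal_cone X (maximizers X c))"
    then obtain c where "N = normal_cone X (maximizers X c)" by blast
    moreover have "maximizers X c face_of X"
      using maximizers_face_of polytope_imp_convex assms by blast
    moreover have "maximizers X c \<noteq> {}"
      using maximizers_nonempty polytope_imp_compact assms by blast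
    ultimately show "N \<in> {normal_cone X F |F. F face_of X \<and> F \<noteq> {}}" by blast
  qed
  then show ?thesis by (simp add: cone)
qed

lemma normal_fan_eqI:
  assumes "polytope X" "X \<noteq> {}" "polytope Y" "Y \<noteq> {}"
    and "\<And>c c'. maximizers X c \<subseteq> maximizers X c' \<longleftrightarrow> maximizers Y c \<subseteq> maximizers Y c'"
  shows "normal_fan X = normal_fan Y"
  using assms by (simp add: normal_fan_eq_maximizer_cones)

definition minkowski_mix :: "real \<Rightarrow> 'a::real_vector set \<Rightarrow> 'a set \<Rightarrow> 'a set" where
  "minkowski_mix t B T = {(1 - t) *\<^sub>R y + t *\<^sub>R z | y z. y \<in> B \<and> z \<in> T}"

lemma minkowski_mixI: "y \<in> B \<Longrightarrow> z \<in> T \<Longrightarrow> (1 - t) *\<^sub>R y + t *\<^sub>R z \<in> minkowski_mix t B T"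
  unfolding minkowski_mix_def by blast

lemma minkowski_mixE:
  assumes "x \<in> minkowski_mix t B T"
  obtains y z where "y \<in> B" "z \<in> T" "x = (1 - t) *\<^sub>R y + t *\<^sub>R z"
  using assms unfolding minkowski_mix_def by blast

lemma minkowski_mix_0: "T \<noteq> {} \<Longrightarrow> minkowski_mix 0 B T = B"
  unfolding minkowski_mix_def by auto

lemma minkowski_mix_1: "B \<noteq> {} \<Longrightarrow> minkowski_mix 1 B T = T"
  unfolding minkowski_mix_def by auto

lemma maximizers_minkowski_mix_iff:
  assumes t: "0 < t" "t < 1" and y: "y \<in> B" and z: "z \<in> T"
  shows "(1 - t) *\<^sub>R y + t *\<^sub>R z \<in> maximizers (minkowski_mix t B T) c \<longleftrightarrow>
         y \<in> maximizers B c \<and> z \<in> maximizers T c"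
proof
  assume max: "(1 - t) *\<^sub>R y + t *\<^sub>R z \<in> maximizers (minkowski_mix t B T) c"
  have "(1 - t) * inner c y' \<le> (1 - t) * inner c y" if "y' \<in> B" for y'
    using maximizers_le[OF max minkowski_mixI[OF that z]] by (simp add: inner_add_right)
  moreover have "t * inner c z' \<le> t * inner c z" if "z' \<in> T" for z'
    using maximizers_le[OF max minkowski_mixI[OF y that]] by (simp add: inner_add_right)
  ultimately show "y \<in> maximizers B c \<and> z \<in> maximizers T c"
    using y z t by (auto intro!: maximizersI)
next
  assume max: "y \<in> maximizers B c \<and> z \<in> maximizers T c"
  show "(1 - t) *\<^sub>R y + t *\<^sub>R z \<in> maximizers (minkowski_mix t B T) c"
  proof (rule maximizersI[OF minkowski_mixI[OF y z]])
    fix x assume "x \<in> minkowski_mix t B T"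
    then obtain y' z' where yz: "y' \<in> B" "z' \<in> T" "x = (1 - t) *\<^sub>R y' + t *\<^sub>R z'"
      by (rule minkowski_mixE)
    have "inner c y' \<le> inner c y" "inner c z' \<le> inner c z"
      using max yz maximizers_le by blast+
    then have "(1 - t) * inner c y' + t * inner c z' \<le> (1 - t) * inner c y + t * inner c z"
      using t by (intro add_mono mult_left_mono) auto
    then show "inner c x \<le> inner c ((1 - t) *\<^sub>R y + t *\<^sub>R z)"
      using yz by (simp add: inner_add_right)
  qed
qed

lemma maximizers_minkowski_mix_subset_iff:
  fixes B T :: "'a::euclidean_space set"
  assumes t: "0 < t" "t < 1" and "compact B" "B \<noteq> {}" "compact T" "T \<noteq> {}"
  shows "maximizers (minkowski_mix t B T) c \<subseteq> maximizers (minkowski_mix t B T) c' \<longleftrightarrow>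
         maximizers B c \<subseteq> maximizers B c' \<and> maximizers T c \<subseteq> maximizers T c'"
    (is "?M c \<subseteq> ?M c' \<longleftrightarrow> _")
proof
  assume sub: "?M c \<subseteq> ?M c'"
  obtain y0 where y0: "y0 \<in> maximizers B c" using maximizers_nonempty[OF assms(3,4)] by blast
  obtain z0 where z0: "z0 \<in> maximizers T c" using maximizers_nonempty[OF assms(5,6)] by blast
  have y0B: "y0 \<in> B" and z0T: "z0 \<in> T" using y0 z0 maximizers_subset by blast+
  have "y \<in> maximizers B c'" if y: "y \<in> maximizers B c" for y
  proof -
    have yB: "y \<in> B" using y maximizers_subset by blast
    have "(1 - t) *\<^sub>R y + t *\<^sub>R z0 \<in> ?M c"
      using maximizers_minkowski_mix_iff[OF t yB z0T] y z0 by blast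
    with sub show ?thesis
      using maximizers_minkowski_mix_iff[OF t yB z0T] by blast
  qed
  moreover have "z \<in> maximizers T c'" if z: "z \<in> maximizers T c" for z
  proof -
    have zT: "z \<in> T" using z maximizers_subset by blast
    have "(1 - t) *\<^sub>R y0 + t *\<^sub>R z \<in> ?M c"
      using maximizers_minkowski_mix_iff[OF t y0B zT] y0 z by blast
    with sub show ?thesis
      using maximizers_minkowski_mix_iff[OF t y0B zT] by blast
  qed
  ultimately show "maximizers B c \<subseteq> maximizers B c' \<and> maximizers T c \<subseteq> maximizers T c'"
    by blast
next
  assume sub: "maximizers B c \<subseteq> maximizers B c' \<and> maximizers T c \<subseteq> maximizers T c'"
  show "?M c \<subseteq> ?M c'"
  proof
    fix x assume x: "x \<in> ?M c"
    then obtain y z where yz: "y \<in> B" "z \<in> T" "x = (1 - t) *\<^sub>R y + t *\<^sub>R z"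
      using maximizers_subset by (metis minkowski_mixE subsetD)
    with x sub show "x \<in> ?M c'"
      using maximizers_minkowski_mix_iff[OF t yz(1,2)] by blast
  qed
qed

lemma maximizers_minkowski_mix_singleton:
  fixes B T :: "'a::euclidean_space set"
  assumes t: "0 < t" "t < 1" and "compact B" "B \<noteq> {}" "compact T" "T \<noteq> {}"
    and p: "maximizers (minkowski_mix t B T) c = {p}"
  obtains y z where "maximizers B c = {y}" "maximizers T c = {z}" "p = (1 - t) *\<^sub>R y + t *\<^sub>R z"
proof -
  obtain y where y: "y \<in> maximizers B c" using maximizers_nonempty[OF assms(3,4)] by blast
  obtain z where z: "z \<in> maximizers T c" using maximizers_nonempty[OF assms(5,6)] by blast
  have mix_eq: "(1 - t) *\<^sub>R y' + t *\<^sub>R z' = p"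
    if "y' \<in> maximizers B c" "z' \<in> maximizers T c" for y' z'
  proof -
    have "y' \<in> B" "z' \<in> T" using that maximizers_subset by blast+
    with that have "(1 - t) *\<^sub>R y' + t *\<^sub>R z' \<in> maximizers (minkowski_mix t B T) c"
      using maximizers_minkowski_mix_iff[OF t] by blast
    then show ?thesis using p by simp
  qed
  have "y' = y" if "y' \<in> maximizers B c" for y'
  proof -
    have "(1 - t) *\<^sub>R y' = (1 - t) *\<^sub>R y"
      using mix_eq[OF that z] mix_eq[OF y z] by (metis add_right_cancel)
    then show ?thesis using t by simp
  qed
  with y have "maximizers B c = {y}" by blast
  moreover have "z' = z" if "z' \<in> maximizers T c" for z'
  proof -
    have "t *\<^sub>R z' = t *\<^sub>R z"
      using mix_eq[OF y that] mix_eq[OF y z] by (metis add_left_cancel)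
    then show ?thesis using t by simp
  qed
  with z have "maximizers T c = {z}" by blast
  ultimately show thesis using that mix_eq[OF y z] by simp
qed

lemma face_of_aff_dim_1_eq_singleton:
  assumes "convex e" "aff_dim e = 1" "F face_of e" "F \<noteq> e" "x \<in> F"
  shows "F = {x}"
proof -
  have "aff_dim F < aff_dim e" by (rule face_of_aff_dim_lt[OF assms(1,3,4)])
  moreover have "aff_dim F \<noteq> -1" using assms(5) by (metis aff_dim_empty empty_iff)
  ultimately have "aff_dim F = 0" using aff_dim_geq[of F] assms(2) by linarith
  then show ?thesis using assms(5) by (metis aff_dim_eq_0 singletonD)
qed

lemma aff_dim_convex_hull_Un_le:
  fixes B T :: "(real^'d) set"
  assumes lin: "lin_dir B = lin_dir T" and w0: "w0 \<in> T"
  shows "aff_dim (convex hull (B \<union> T)) \<le> aff_dim B + 1"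
proof -
  let ?A = "affine hull (insert w0 B)"
  have "x \<in> ?A" if x: "x \<in> T" for x
  proof -
    have "x - w0 \<in> lin_dir T" unfolding lin_dir_def using hull_inc[OF x] hull_inc[OF w0] by blast
    then have "x - w0 \<in> lin_dir B" using lin by simp
    then obtain y z where yz: "y \<in> affine hull B" "z \<in> affine hull B" "x - w0 = y - z"
      unfolding lin_dir_def by blast
    have "affine hull B \<subseteq> ?A" by (simp add: hull_mono subset_insertI)
    with yz have "y \<in> ?A" "z \<in> ?A" by auto
    then have "w0 + 1 *\<^sub>R (y - z) \<in> ?A"
      by (intro mem_affine_3_minus) (simp_all add: hull_inc)
    moreover have "w0 + 1 *\<^sub>R (y - z) = x" using yz(3) by (simp add: algebra_simps)
    ultimately show "x \<in> ?A" by simp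
  qed
  moreover have "B \<subseteq> ?A" by (meson hull_subset subset_insertI subset_trans)
  ultimately have "affine hull (B \<union> T) \<subseteq> ?A"
    by (intro hull_minimal) auto
  then have "convex hull (B \<union> T) \<subseteq> ?A"
    using convex_hull_subset_affine_hull by blast
  then have "aff_dim (convex hull (B \<union> T)) \<le> aff_dim ?A"
    by (rule aff_dim_subset)
  also have "\<dots> = aff_dim (insert w0 B)" by simp
  also have "\<dots> \<le> aff_dim B + 1" by (simp add: aff_dim_insert)
  finally show ?thesis .
qed

lemma lattice_pt_extreme_point:
  "lattice_polytope P \<Longrightarrow> v extreme_point_of P \<Longrightarrow> lattice_pt v"
  unfolding lattice_polytope_def using extreme_point_of_convex_hull by blast

lemma lattice_polytopeI:
  assumes "polytope S" "\<And>p. p extreme_point_of S \<Longrightarrow> lattice_pt p"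
  shows "lattice_polytope S"
  unfolding lattice_polytope_def
  using assms finite_polyhedron_extreme_points[OF polytope_imp_polyhedron[OF assms(1)]]
    Krein_Milman_Minkowski[OF polytope_imp_compact polytope_imp_convex]
  by blast

lemma lattice_pt_add_scaleR_nat: "lattice_pt v \<Longrightarrow> lattice_pt u \<Longrightarrow> lattice_pt (v + real n *\<^sub>R u)"
  unfolding lattice_pt_def by auto

lemma lattice_basis_coordinate_unit:
  assumes U: "lattice_basis U" and u0: "u0 \<in> U" and others: "\<And>u. u \<in> U \<Longrightarrow> u \<noteq> u0 \<Longrightarrow> u $ k = 0"
  shows "\<bar>u0 $ k\<bar> = 1"
proof -
  have "lattice_pt (axis k (1::real))"
    unfolding lattice_pt_def axis_def by auto
  then obtain c where c: "\<forall>u\<in>U. c u \<in> \<int>" "axis k 1 = (\<Sum>u\<in>U. c u *\<^sub>R u)"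
    using U unfolding lattice_basis_def by blast
  have "1 = (\<Sum>u\<in>U. c u * u $ k)" using arg_cong[OF c(2), of "\<lambda>x. x $ k"] by simp
  also have "\<dots> = c u0 * u0 $ k + (\<Sum>u\<in>U - {u0}. c u * u $ k)"
    using U u0 unfolding lattice_basis_def by (intro sum.remove) auto
  also have "(\<Sum>u\<in>U - {u0}. c u * u $ k) = 0"
    using others by (intro sum.neutral) auto
  finally have prod: "c u0 * u0 $ k = 1" by simp
  obtain m where m: "c u0 = of_int m" using c(1) u0 Ints_cases by metis
  obtain n where n: "u0 $ k = of_int n"
    using u0 U Ints_cases unfolding lattice_basis_def lattice_pt_def by metis
  have "m * n = 1" using prod unfolding m n by (metis of_int_eq_1_iff of_int_mult)
  then have "\<bar>n\<bar> = 1" using zmult_eq_1_iff by auto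
  then show ?thesis unfolding n by (metis of_int_1 of_int_abs)
qed

lemma prim_dir_flat:
  assumes "prim_dir v e u" "e \<subseteq> {x. x $ k = v $ k}"
  shows "u $ k = 0"
proof -
  obtain t where "t > 0" "v + t *\<^sub>R u \<in> e" using assms(1) unfolding prim_dir_def by blast
  with assms(2) show ?thesis by auto
qed

lemma prim_dir_in_segment:
  assumes "prim_dir v e u" "e \<subseteq> closed_segment v w"
  obtains a where "a > 0" "u = a *\<^sub>R (w - v)"
proof -
  obtain t where t: "t > 0" "v + t *\<^sub>R u \<in> e" and "u \<noteq> 0"
    using assms(1) unfolding prim_dir_def by blast
  with assms(2) have "v + t *\<^sub>R u \<in> closed_segment v w" by blast
  then obtain s where s: "0 \<le> s" "v + t *\<^sub>R u = (1 - s) *\<^sub>R v + s *\<^sub>R w"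
    unfolding in_segment by blast
  then have eq: "t *\<^sub>R u = s *\<^sub>R (w - v)" by (simp add: algebra_simps)
  have "u = inverse t *\<^sub>R (t *\<^sub>R u)" using t(1) by simp
  also have "\<dots> = (s / t) *\<^sub>R (w - v)" unfolding eq by (simp add: divide_inverse_commute)
  finally have u: "u = (s / t) *\<^sub>R (w - v)" .
  with \<open>u \<noteq> 0\<close> have "s \<noteq> 0" by auto
  with s(1) t(1) have "s / t > 0" by simp
  then show thesis using u by (rule that)
qed

definition axis_shift :: "'d \<Rightarrow> (real^'d) set \<Rightarrow> (real^'d) set" where
  "axis_shift j X = (\<lambda>q. q + axis j 1) ` X"

lemma axis_shift_subset_iff: "axis_shift j X \<subseteq> axis_shift j Y \<longleftrightarrow> X \<subseteq> Y"
  unfolding axis_shift_def by auto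

lemma std_prism_eq_sums:
  "std_prism Q j = (\<Union>x\<in>Q. \<Union>y\<in>closed_segment 0 (axis j 1). {x + y})"
  unfolding std_prism_def closed_segment_def by auto

lemma compact_std_prism: "polytope Q \<Longrightarrow> compact (std_prism Q j)"
  unfolding std_prism_eq_sums by (intro compact_sums' polytope_imp_compact compact_segment)

lemma convex_std_prism: "polytope Q \<Longrightarrow> convex (std_prism Q j)"
  unfolding std_prism_eq_sums by (intro convex_sums polytope_imp_convex convex_closed_segment)

lemma std_prism_memI: "q \<in> Q \<Longrightarrow> 0 \<le> t \<Longrightarrow> t \<le> 1 \<Longrightarrow> q + t *\<^sub>R axis j 1 \<in> std_prism Q j"
  unfolding std_prism_def by blast

lemma bottom_subset_std_prism: "Q \<subseteq> std_prism Q j"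
  using std_prism_memI[of _ Q 0 j] by auto

lemma top_subset_std_prism: "axis_shift j Q \<subseteq> std_prism Q j"
  using std_prism_memI[of _ Q 1 j] by (auto simp: axis_shift_def)

lemma extreme_point_of_std_prism:
  assumes "x extreme_point_of std_prism Q j"
  shows "x \<in> Q \<or> x \<in> axis_shift j Q"
proof -
  obtain q t where q: "q \<in> Q" "0 \<le> t" "t \<le> 1" "x = q + t *\<^sub>R axis j 1"
    using assms unfolding extreme_point_of_def std_prism_def by blast
  have ends: "q \<in> std_prism Q j" "q + axis j 1 \<in> std_prism Q j"
    using q(1) bottom_subset_std_prism top_subset_std_prism unfolding axis_shift_def by blast+
  have "q \<noteq> q + axis j 1" by (simp add: axis_eq_0_iff)
  then have "t \<in> {0, 1}"
    using assms ends q unfolding extreme_point_of_def in_segment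
    by (smt (verit, best) insertCI scaleR_add_right scaleR_collapse add.assoc)
  then show ?thesis using q unfolding axis_shift_def by auto
qed

lemma face_of_std_prism_top_eq_shift_bottom:
  assumes Qj: "Q \<subseteq> {x. x $ j = 0}" and W: "W face_of std_prism Q j"
    and bottom: "W \<inter> Q \<noteq> {}" and top: "W \<inter> axis_shift j Q \<noteq> {}"
  shows "W \<inter> axis_shift j Q = axis_shift j (W \<inter> Q)"
proof -
  let ?e = "axis j (1::real)"
  have swap: "x + ?e \<in> W \<and> q \<in> W"
    if x: "x \<in> W" "x \<in> Q" and q: "q \<in> Q" "q + ?e \<in> W" for x q
  proof -
    \<comment> \<open>\<open>W\<close> contains the common midpoint of \<open>[x, q + e]\<close> and \<open>[x + e, q]\<close>, hence \<open>x + e\<close> and \<open>q\<close>\<close>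
    have "midpoint x (q + ?e) \<in> W"
      using x q face_of_imp_convex[OF W] midpoint_in_closed_segment
      by (metis convex_contains_segment subsetD)
    moreover have "midpoint x (q + ?e) = midpoint (x + ?e) q"
      by (simp add: midpoint_def algebra_simps)
    moreover have "x + ?e \<noteq> q"
    proof -
      have "x $ j = 0" "q $ j = 0" using x(2) q(1) Qj by auto
      then show ?thesis by (auto dest!: arg_cong[where f = "\<lambda>y. y $ j"])
    qed
    moreover have "x + ?e \<in> std_prism Q j" "q \<in> std_prism Q j"
      using x q bottom_subset_std_prism top_subset_std_prism unfolding axis_shift_def by blast+
    ultimately show ?thesis
      using W unfolding face_of_def by (metis midpoint_in_open_segment)
  qed
  obtain x0 where x0: "x0 \<in> W" "x0 \<in> Q" using bottom by auto
  obtain q0 where q0: "q0 \<in> Q" "q0 + ?e \<in> W" using top by (auto simp: axis_shift_def)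
  show ?thesis
    using swap[OF x0] swap[OF _ _ q0] unfolding axis_shift_def by auto
qed

locale face_lattice_iso =
  fixes P S :: "'a::euclidean_space set" and f :: "'a set \<Rightarrow> 'a set"
  assumes bij_faces: "bij_betw f {F. F face_of P} {G. G face_of S}"
    and face_subset_iff: "\<And>F F'. F face_of P \<Longrightarrow> F' face_of P \<Longrightarrow> F \<subseteq> F' \<longleftrightarrow> f F \<subseteq> f F'"
begin

lemma face_of_image: "F face_of P \<Longrightarrow> f F face_of S"
  using bij_betw_apply[OF bij_faces] by auto

lemma face_of_preimage:
  assumes "G face_of S"
  obtains F where "F face_of P" "f F = G"
  using assms bij_faces unfolding bij_betw_def by (metis (mono_tags, lifting) imageE mem_Collect_eq)

lemma image_inj: "F face_of P \<Longrightarrow> F' face_of P \<Longrightarrow> f F = f F' \<Longrightarrow> F = F'"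
  using face_subset_iff by blast

lemma image_empty: "f {} = {}"
proof -
  obtain F where "F face_of P" "f F = {}" using face_of_preimage[OF empty_face_of] .
  then show ?thesis using face_subset_iff[of "{}" F] by auto
qed

lemma image_nonempty: "F face_of P \<Longrightarrow> F \<noteq> {} \<Longrightarrow> f F \<noteq> {}"
  using image_inj[of F "{}"] image_empty by auto

lemma image_Int:
  assumes F: "F face_of P" and F': "F' face_of P"
  shows "f (F \<inter> F') = f F \<inter> f F'"
proof
  have FF': "F \<inter> F' face_of P" using F F' face_of_Int by blast
  show "f (F \<inter> F') \<subseteq> f F \<inter> f F'"
    using face_subset_iff[OF FF' F] face_subset_iff[OF FF' F'] by auto
  obtain G where G: "G face_of P" "f G = f F \<inter> f F'"
    using face_of_preimage face_of_Int face_of_image F F' by metis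
  then have "G \<subseteq> F \<inter> F'" using face_subset_iff[OF G(1) F] face_subset_iff[OF G(1) F'] by auto
  then show "f F \<inter> f F' \<subseteq> f (F \<inter> F')" using face_subset_iff[OF G(1) FF'] G(2) by auto
qed

lemma image_vertex:
  assumes "compact S" "convex S" and v: "v extreme_point_of P"
  obtains x where "x extreme_point_of S" "f {v} = {x}"
proof -
  have vP: "{v} face_of P" using v face_of_singleton by blast
  then have W: "f {v} face_of S" by (rule face_of_image)
  obtain x where x: "x extreme_point_of f {v}"
    using extreme_point_exists_convex face_of_imp_compact face_of_imp_convex image_nonempty
      assms(1,2) W vP by (metis empty_not_insert)
  then have xS: "{x} face_of S" using W face_of_singleton face_of_trans by blast
  then obtain G where G: "G face_of P" "f G = {x}" by (rule face_of_preimage)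
  have "x \<in> f {v}" using x extreme_point_of_def by blast
  then have "G \<subseteq> {v}" using face_subset_iff[OF G(1) vP] G(2) by auto
  moreover have "G \<noteq> {}" using G(2) image_empty by auto
  ultimately have "f {v} = {x}" using G by (metis subset_singletonD)
  with xS show thesis using face_of_singleton that by blast
qed

end

locale slab_prismatoid = face_lattice_iso P "std_prism Q j" f
  for P :: "(real^'d) set" and Q j f +
  fixes B T :: "(real^'d) set" and k :: 'd and bb hh :: real
  assumes polytope_P: "polytope P" and aff_dim_P: "aff_dim P = int CARD('d)"
    and polytope_Q: "polytope Q" and Q_nonempty: "Q \<noteq> {}" and Q_level: "Q \<subseteq> {x. x $ j = 0}"
    and B_face: "B face_of P" and T_face: "T face_of P"
    and f_B: "f B = Q" and f_T: "f T = axis_shift j Q"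
    and parallel: "lin_dir B = lin_dir T"
    and B_level: "B \<subseteq> {x. x $ k = bb}" and T_level: "T \<subseteq> {x. x $ k = bb + hh}"
    and height_pos: "hh > 0"
begin

lemma B_nonempty: "B \<noteq> {}"
  using f_B Q_nonempty image_empty by auto

lemma T_nonempty: "T \<noteq> {}"
  using f_T Q_nonempty image_empty by (auto simp: axis_shift_def)

lemma polytope_B: "polytope B"
  using B_face polytope_P face_of_polytope_polytope by blast

lemma polytope_T: "polytope T"
  using T_face polytope_P face_of_polytope_polytope by blast

lemma compact_B: "compact B" and convex_B: "convex B"
  using polytope_B polytope_imp_compact polytope_imp_convex by blast+

lemma compact_T: "compact T" and convex_T: "convex T"
  using polytope_T polytope_imp_compact polytope_imp_convex by blast+

lemma B_disjoint_T: "x \<in> B \<Longrightarrow> x \<notin> T"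
  using B_level T_level height_pos by fastforce

lemma extreme_point_in_B_or_T:
  assumes v: "v extreme_point_of P"
  shows "v \<in> B \<or> v \<in> T"
proof -
  have vP: "{v} face_of P" using v face_of_singleton by blast
  obtain x where x: "x extreme_point_of std_prism Q j" "f {v} = {x}"
    using image_vertex[OF compact_std_prism[OF polytope_Q] convex_std_prism[OF polytope_Q] v] .
  then have "f {v} \<subseteq> f B \<or> f {v} \<subseteq> f T"
    using extreme_point_of_std_prism f_B f_T by auto
  then show ?thesis using face_subset_iff[OF vP B_face] face_subset_iff[OF vP T_face] by auto
qed

lemma P_eq_convex_hull: "P = convex hull (B \<union> T)"
proof
  have "{x. x extreme_point_of P} \<subseteq> B \<union> T" using extreme_point_in_B_or_T by blast
  then show "P \<subseteq> convex hull (B \<union> T)"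
    using Krein_Milman_Minkowski polytope_P polytope_imp_compact polytope_imp_convex hull_mono
    by metis
  show "convex hull (B \<union> T) \<subseteq> P"
    using face_of_imp_subset[OF B_face] face_of_imp_subset[OF T_face]
      polytope_imp_convex[OF polytope_P] by (simp add: hull_minimal)
qed

lemma face_subset_convex_hull:
  assumes F: "F face_of P"
  shows "F \<subseteq> convex hull ((F \<inter> B) \<union> (F \<inter> T))"
proof -
  have "compact F" "convex F"
    using F polytope_P face_of_imp_compact face_of_imp_convex polytope_imp_compact polytope_imp_convex
    by blast+
  moreover have "{x. x extreme_point_of F} \<subseteq> (F \<inter> B) \<union> (F \<inter> T)"
    using extreme_point_in_B_or_T extreme_point_of_face[OF F] by blast
  ultimately show ?thesis using Krein_Milman_Minkowski hull_mono by metis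
qed

lemma face_top_eq_shift_bottom:
  assumes V: "V face_of P" and "V \<inter> B \<noteq> {}" "V \<inter> T \<noteq> {}"
  shows "f (V \<inter> T) = axis_shift j (f (V \<inter> B))"
proof -
  have bottom: "f (V \<inter> B) = f V \<inter> Q" and top: "f (V \<inter> T) = f V \<inter> axis_shift j Q"
    using image_Int[OF V B_face] image_Int[OF V T_face] f_B f_T by simp_all
  moreover have "f V \<inter> Q \<noteq> {}" "f V \<inter> axis_shift j Q \<noteq> {}"
    using bottom top assms image_nonempty face_of_Int B_face T_face by metis+
  ultimately show ?thesis
    using face_of_std_prism_top_eq_shift_bottom[OF Q_level face_of_image[OF V]] by simp
qed

lemma exists_face_Int_maximizers:
  obtains V where "V face_of P" "V \<inter> B = maximizers B c" "V \<inter> T = maximizers T c"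
proof -
  obtain y where y: "y \<in> maximizers B c" using maximizers_nonempty[OF compact_B B_nonempty] by blast
  obtain z where z: "z \<in> maximizers T c" using maximizers_nonempty[OF compact_T T_nonempty] by blast
  \<comment> \<open>tilting \<open>c\<close> along \<open>e\<^sub>k\<close> shifts its values on \<open>B\<close> and \<open>T\<close> by different constants; choose the
      tilt that equalises the two maxima\<close>
  define l where "l = (inner c y - inner c z) / hh"
  define c' where "c' = c + l *\<^sub>R axis k 1"
  have c'_B: "inner c' x = inner c x + l * bb" if "x \<in> B" for x
    using that B_level by (auto simp: c'_def inner_add_left inner_axis')
  have c'_T: "inner c' x = inner c x + (l * bb + (inner c y - inner c z))" if "x \<in> T" for x
  proof -
    have "x $ k = bb + hh" using that T_level by auto
    then show ?thesis
      using height_pos by (simp add: c'_def l_def inner_add_left inner_axis' field_simps)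
  qed
  have yB: "y \<in> B" and zT: "z \<in> T" using y z maximizers_subset by blast+
  have le: "inner c' x \<le> inner c' y" if "x \<in> B \<union> T" for x
  proof (cases "x \<in> B")
    case True
    then show ?thesis using c'_B[OF True] c'_B[OF yB] maximizers_le[OF y True] by simp
  next
    case False
    with that have xT: "x \<in> T" by blast
    then show ?thesis using c'_T[OF xT] c'_B[OF yB] maximizers_le[OF z xT] by simp
  qed
  have "P \<subseteq> {x. inner c' x \<le> inner c' y}"
    unfolding P_eq_convex_hull using le by (intro hull_minimal) (auto simp: convex_halfspace_le)
  moreover have "inner c' z = inner c' y" using c'_T[OF zT] c'_B[OF yB] by simp
  moreover have BP: "B \<subseteq> P" and TP: "T \<subseteq> P"
    using face_of_imp_subset B_face T_face by blast+
  ultimately have "y \<in> maximizers P c'" "z \<in> maximizers P c'"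
    using yB zT by (auto intro!: maximizersI)
  then have "maximizers P c' \<inter> B = maximizers B c" "maximizers P c' \<inter> T = maximizers T c"
    using maximizers_Int_subset[OF BP yB] maximizers_Int_subset[OF TP zT]
      maximizers_shift[OF c'_B] maximizers_shift[OF c'_T] by simp_all
  moreover have "maximizers P c' face_of P"
    using maximizers_face_of polytope_imp_convex polytope_P by blast
  ultimately show thesis using that by blast
qed

lemma maximizers_B_face_of: "maximizers B c face_of P"
  using face_of_trans maximizers_face_of convex_B B_face by blast

lemma maximizers_T_face_of: "maximizers T c face_of P"
  using face_of_trans maximizers_face_of convex_T T_face by blast

lemma image_maximizers_T: "f (maximizers T c) = axis_shift j (f (maximizers B c))"
proof -
  obtain V where V: "V face_of P" "V \<inter> B = maximizers B c" "V \<inter> T = maximizers T c"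
    by (rule exists_face_Int_maximizers)
  moreover have "V \<inter> B \<noteq> {}" "V \<inter> T \<noteq> {}"
    using V maximizers_nonempty compact_B compact_T B_nonempty T_nonempty by auto
  ultimately show ?thesis using face_top_eq_shift_bottom by metis
qed

lemma maximizers_B_subset_iff_T:
  "maximizers B c \<subseteq> maximizers B c' \<longleftrightarrow> maximizers T c \<subseteq> maximizers T c'"
  using face_subset_iff[OF maximizers_B_face_of maximizers_B_face_of]
    face_subset_iff[OF maximizers_T_face_of maximizers_T_face_of]
    image_maximizers_T axis_shift_subset_iff by metis

lemma normal_fan_T_eq_B: "normal_fan T = normal_fan B"
  using normal_fan_eqI[OF polytope_T T_nonempty polytope_B B_nonempty] maximizers_B_subset_iff_T
  by metis

lemma slice_eq_minkowski_mix:
  assumes t: "0 \<le> t" "t \<le> 1"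
  shows "P \<inter> {x. x $ k = bb + t * hh} = minkowski_mix t B T"
proof (intro set_eqI iffI)
  fix x assume x: "x \<in> P \<inter> {x. x $ k = bb + t * hh}"
  then obtain u v y z where uv: "0 \<le> u" "0 \<le> v" "u + v = 1" "y \<in> B" "z \<in> T"
    and x_eq: "x = u *\<^sub>R y + v *\<^sub>R z"
    using P_eq_convex_hull convex_hull_union_two[OF convex_B B_nonempty convex_T T_nonempty] by auto
  have "y $ k = bb" "z $ k = bb + hh" using uv B_level T_level by auto
  then have "x $ k = (u + v) * bb + v * hh" using x_eq by (simp add: algebra_simps)
  with x uv(3) height_pos have "v = t" by simp
  moreover from this uv(3) have "u = 1 - t" by simp
  ultimately have "x = (1 - t) *\<^sub>R y + t *\<^sub>R z" using x_eq by simp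
  then show "x \<in> minkowski_mix t B T" using minkowski_mixI[OF uv(4,5)] by simp
next
  fix x assume "x \<in> minkowski_mix t B T"
  then obtain y z where yz: "y \<in> B" "z \<in> T" "x = (1 - t) *\<^sub>R y + t *\<^sub>R z"
    by (rule minkowski_mixE)
  then have "x \<in> convex hull (B \<union> T)"
    using t convexD[OF convex_convex_hull, of y "B \<union> T" z "1 - t" t]
      hull_inc[of y "B \<union> T" convex] hull_inc[of z "B \<union> T" convex] by auto
  moreover have "y $ k = bb" "z $ k = bb + hh" using yz B_level T_level by auto
  then have "x $ k = bb + t * hh" unfolding yz(3) by (simp add: algebra_simps)
  ultimately show "x \<in> P \<inter> {x. x $ k = bb + t * hh}" using P_eq_convex_hull by blast
qed

lemma polytope_minkowski_mix:
  assumes "0 \<le> t" "t \<le> 1"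
  shows "polytope (minkowski_mix t B T)"
proof -
  have "{x. x $ k = bb + t * hh} = {x. inner (axis k 1) x = bb + t * hh}"
    by (simp add: inner_axis')
  then show ?thesis
    using slice_eq_minkowski_mix[OF assms] polytope_Int_polyhedron polytope_P polyhedron_hyperplane
    by metis
qed

lemma minkowski_mix_nonempty: "minkowski_mix t B T \<noteq> {}"
  using B_nonempty T_nonempty minkowski_mixI by blast

lemma normal_fan_minkowski_mix:
  assumes t: "0 \<le> t" "t \<le> 1"
  shows "normal_fan (minkowski_mix t B T) = normal_fan B"
proof -
  consider "t = 0" | "t = 1" | "0 < t" "t < 1" using t by linarith
  then show ?thesis
  proof cases
    case 1
    then show ?thesis using minkowski_mix_0[OF T_nonempty] by simp
  next
    case 2
    then show ?thesis using minkowski_mix_1[OF B_nonempty] normal_fan_T_eq_B by simp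
  next
    case 3
    show ?thesis
      using normal_fan_eqI[OF polytope_minkowski_mix[OF t] minkowski_mix_nonempty polytope_B B_nonempty]
        maximizers_minkowski_mix_subset_iff[OF 3 compact_B B_nonempty compact_T T_nonempty]
        maximizers_B_subset_iff_T
      by metis
  qed
qed

lemma aff_dim_minkowski_mix:
  assumes t: "0 \<le> t" "t \<le> 1"
  shows "aff_dim (minkowski_mix t B T) = int CARD('d) - 1"
proof (rule antisym)
  have "minkowski_mix t B T \<subseteq> {x. inner (axis k 1) x = bb + t * hh}"
    using slice_eq_minkowski_mix[OF t] by (auto simp: inner_axis')
  then have "aff_dim (minkowski_mix t B T) \<le> aff_dim {x::real^'d. inner (axis k 1) x = bb + t * hh}"
    by (rule aff_dim_subset)
  also have "\<dots> = int CARD('d) - 1" by (simp add: axis_eq_0_iff)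
  finally show "aff_dim (minkowski_mix t B T) \<le> int CARD('d) - 1" .
next
  obtain y0 where y0: "y0 \<in> B" using B_nonempty by blast
  obtain z0 where z0: "z0 \<in> T" using T_nonempty by blast
  have dim_B: "int CARD('d) - 1 \<le> aff_dim B"
    using aff_dim_convex_hull_Un_le[OF parallel z0] aff_dim_P P_eq_convex_hull by simp
  have dim_T: "int CARD('d) - 1 \<le> aff_dim T"
    using aff_dim_convex_hull_Un_le[OF parallel[symmetric] y0] aff_dim_P P_eq_convex_hull
    by (simp add: Un_commute)
  show "int CARD('d) - 1 \<le> aff_dim (minkowski_mix t B T)"
  proof (cases "t = 1")
    case True
    then show ?thesis using minkowski_mix_1[OF B_nonempty] dim_T by simp
  next
    case False
    have "(+) (t *\<^sub>R z0) ` ((*\<^sub>R) (1 - t) ` B) \<subseteq> minkowski_mix t B T"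
      using minkowski_mixI[OF _ z0] by (auto simp: add.commute)
    then have "aff_dim ((+) (t *\<^sub>R z0) ` ((*\<^sub>R) (1 - t) ` B)) \<le> aff_dim (minkowski_mix t B T)"
      by (rule aff_dim_subset)
    moreover have "aff_dim ((+) (t *\<^sub>R z0) ` ((*\<^sub>R) (1 - t) ` B)) = aff_dim B"
      unfolding aff_dim_translation_eq using False
      by (intro aff_dim_injective_linear_image) (auto simp: inj_on_def linear_scaleR)
    ultimately show ?thesis using dim_B by simp
  qed
qed

lemma edge_Int_B_T:
  assumes e: "is_edge P e" and v: "v \<in> e" "v \<in> B" and rising: "\<not> e \<subseteq> B"
  obtains w where "e \<inter> B = {v}" "e \<inter> T = {w}"
proof -
  have eP: "e face_of P" and dim_e: "aff_dim e = 1" using e unfolding is_edge_def by blast+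
  have "compact e" and conv_e: "convex e"
    using eP polytope_P face_of_imp_compact face_of_imp_convex polytope_imp_compact polytope_imp_convex
    by blast+
  have face_e: "e \<inter> F face_of e" if "F face_of P" for F
    using face_of_subset[OF face_of_Int[OF eP that]] face_of_imp_subset[OF eP] by blast
  have "e \<inter> B = {v}"
    using face_of_aff_dim_1_eq_singleton[OF conv_e dim_e face_e[OF B_face]] v rising by blast
  moreover obtain w where w: "w extreme_point_of e" "w \<notin> B"
  proof -
    have "\<not> {x. x extreme_point_of e} \<subseteq> B"
      using rising Krein_Milman_Minkowski[OF \<open>compact e\<close> conv_e] convex_B hull_minimal by metis
    then show thesis using that by blast
  qed
  then have "w \<in> e \<inter> T"
    using extreme_point_in_B_or_T extreme_point_of_face[OF eP] by blast
  then have "e \<inter> T = {w}"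
    using face_of_aff_dim_1_eq_singleton[OF conv_e dim_e face_e[OF T_face]] v B_disjoint_T by blast
  ultimately show thesis using that by blast
qed

lemma rising_edge_unique:
  assumes e: "is_edge P e" "v \<in> e" "\<not> e \<subseteq> B" and e': "is_edge P e'" "v \<in> e'" "\<not> e' \<subseteq> B"
    and v: "v \<in> B"
  shows "e = e'"
proof -
  obtain w where w: "e \<inter> B = {v}" "e \<inter> T = {w}" using edge_Int_B_T[OF e(1,2) v e(3)] .
  obtain w' where w': "e' \<inter> B = {v}" "e' \<inter> T = {w'}" using edge_Int_B_T[OF e'(1,2) v e'(3)] .
  have eP: "e face_of P" "e' face_of P" using e(1) e'(1) unfolding is_edge_def by blast+
  have "f {w} = f {w'}"
    using face_top_eq_shift_bottom[OF eP(1)] face_top_eq_shift_bottom[OF eP(2)] w w' by simp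
  moreover have "{w} face_of P" "{w'} face_of P"
    using face_of_Int[OF eP(1) T_face] face_of_Int[OF eP(2) T_face] w w' by simp_all
  ultimately have "w' = w" using image_inj by blast
  have "v \<noteq> w" using v B_disjoint_T w(2) by blast
  have "e \<inter> e' = e" "e \<inter> e' = e'"
  proof -
    have "e \<inter> e' face_of P" using eP face_of_Int by blast
    then have "e \<inter> e' face_of e" "e \<inter> e' face_of e'"
      using face_of_subset eP face_of_imp_subset by (metis inf.cobounded1 inf.cobounded2)+
    moreover have "convex e" "convex e'" using eP face_of_imp_convex by blast+
    moreover have "v \<in> e \<inter> e'" "w \<in> e \<inter> e'" using e e' w w' \<open>w' = w\<close> by auto
    ultimately show "e \<inter> e' = e" "e \<inter> e' = e'"
      using face_of_aff_dim_1_eq_singleton e(1) e'(1) \<open>v \<noteq> w\<close> unfolding is_edge_def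
      by (metis singletonD)+
  qed
  then show ?thesis by simp
qed

end

locale smooth_slab_prismatoid = slab_prismatoid +
  assumes smooth: "smooth_polytope P"
begin

lemma lattice_pt_extreme_point_P: "v extreme_point_of P \<Longrightarrow> lattice_pt v"
  using smooth lattice_pt_extreme_point unfolding smooth_polytope_def by blast

lemma vertical_edge_lattice:
  assumes v: "maximizers B c = {v}" and w: "maximizers T c = {w}"
  obtains u where "lattice_pt u" "w = v + hh *\<^sub>R u"
proof -
  obtain V where V: "V face_of P" "V \<inter> B = {v}" "V \<inter> T = {w}"
    using exists_face_Int_maximizers v w by metis
  have vV: "v \<in> V" "v \<in> B" and wV: "w \<in> V" "w \<in> T" using V(2,3) by auto
  have "v \<noteq> w" using vV wV B_disjoint_T by blast
  have V_seg: "V \<subseteq> closed_segment v w"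
    using face_subset_convex_hull[OF V(1)] V(2,3) by (simp add: segment_convex_hull insert_commute)
  have "aff_dim V = 1"
  proof (rule antisym)
    show "aff_dim V \<le> 1"
      using aff_dim_subset[OF V_seg] \<open>v \<noteq> w\<close> by (simp add: segment_convex_hull aff_dim_convex_hull)
    show "1 \<le> aff_dim V"
      using aff_dim_subset[of "{v, w}" V] vV wV \<open>v \<noteq> w\<close> by simp
  qed
  then have V_edge: "V \<in> edges_at P v" unfolding edges_at_def is_edge_def using V(1) vV by blast
  have "is_vertex P v" using maximizers_B_face_of[of c] v unfolding is_vertex_def by simp
  then obtain dir where dir: "\<forall>e\<in>edges_at P v. prim_dir v e (dir e)"
    and basis: "lattice_basis (dir ` edges_at P v)"
    using smooth unfolding smooth_polytope_def by blast
  obtain a where a: "a > 0" "dir V = a *\<^sub>R (w - v)"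
    using prim_dir_in_segment dir V_edge V_seg by metis
  \<comment> \<open>every other edge at \<open>v\<close> lies in \<open>B\<close>, so \<open>dir V\<close> is the only basis vector leaving the hyperplane\<close>
  have V_rising: "\<not> V \<subseteq> B" using wV B_disjoint_T by blast
  have flat: "u $ k = 0" if u: "u \<in> dir ` edges_at P v" "u \<noteq> dir V" for u
  proof -
    obtain e where e: "e \<in> edges_at P v" "u = dir e" using u(1) by blast
    have "e \<subseteq> B"
    proof (rule ccontr)
      assume "\<not> e \<subseteq> B"
      with e(1) V_edge V_rising vV(2) have "e = V"
        using rising_edge_unique unfolding edges_at_def by blast
      with u(2) e(2) show False by blast
    qed
    then have "e \<subseteq> {x. x $ k = v $ k}" using B_level vV(2) by auto
    then show ?thesis using prim_dir_flat dir e by blast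
  qed
  have "v $ k = bb" "w $ k = bb + hh" using vV(2) wV(2) B_level T_level by auto
  then have "dir V $ k = a * hh" using a(2) by simp
  moreover have "\<bar>dir V $ k\<bar> = 1"
    using lattice_basis_coordinate_unit[OF basis imageI[OF V_edge] flat] .
  ultimately have "a * hh = 1" using a(1) height_pos by simp
  then have "hh *\<^sub>R dir V = w - v" using a(2) by (simp add: mult.commute)
  then have "w = v + hh *\<^sub>R dir V" by (simp add: algebra_simps)
  moreover have "lattice_pt (dir V)" using dir V_edge unfolding prim_dir_def by blast
  ultimately show thesis using that by blast
qed

lemma lattice_polytope_minkowski_mix:
  assumes h: "hh = real h" and l: "l \<le> h"
  shows "lattice_polytope (minkowski_mix (real l / real h) B T)"
proof -
  define t where "t = real l / real h"
  have t: "0 \<le> t" "t \<le> 1" and th: "t * hh = real l"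
    using l h height_pos by (auto simp: t_def)
  let ?S = "minkowski_mix t B T"
  have "lattice_pt p" if p: "p extreme_point_of ?S" for p
  proof -
    consider "t = 0" | "t = 1" | "0 < t" "t < 1" using t by linarith
    then show ?thesis
    proof cases
      case 1
      with p have "p extreme_point_of B" using minkowski_mix_0[OF T_nonempty] by simp
      then show ?thesis
        using extreme_point_of_face[OF B_face] lattice_pt_extreme_point_P by blast
    next
      case 2
      with p have "p extreme_point_of T" using minkowski_mix_1[OF B_nonempty] by simp
      then show ?thesis
        using extreme_point_of_face[OF T_face] lattice_pt_extreme_point_P by blast
    next
      case 3
      have "{p} face_of ?S" using p face_of_singleton by blast
      then obtain c where "{p} = maximizers ?S c"
        by (rule exposed_face_eq_maximizers[OF polytope_minkowski_mix[OF t]]) simp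
      then obtain y z where yz: "maximizers B c = {y}" "maximizers T c = {z}"
        and p_eq: "p = (1 - t) *\<^sub>R y + t *\<^sub>R z"
        using maximizers_minkowski_mix_singleton[OF 3 compact_B B_nonempty compact_T T_nonempty]
        by metis
      obtain u where u: "lattice_pt u" "z = y + hh *\<^sub>R u"
        using vertical_edge_lattice[OF yz] .
      have "{y} face_of P" using maximizers_B_face_of[of c] yz(1) by simp
      then have "lattice_pt y" using face_of_singleton lattice_pt_extreme_point_P by blast
      moreover have "p = y + real l *\<^sub>R u"
        using p_eq u(2) th by (simp add: algebra_simps flip: th)
      ultimately show ?thesis using lattice_pt_add_scaleR_nat u(1) by simp
    qed
  qed
  then show ?thesis unfolding t_def[symmetric] by (rule lattice_polytopeI[OF polytope_minkowski_mix[OF t]])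
qed

end

theorem lemma4p2:
  fixes P B T :: "(real^'d) set" and k :: 'd and b :: int and h :: nat
  assumes "smooth_polytope P"
    and "prismatoid P B T"
    and "B \<subseteq> {x. x $ k = of_int b}"
    and "T \<subseteq> {x. x $ k = of_int b + of_nat h}"
    and "h > 0"
  shows "\<forall>l::nat. l \<le> h \<longrightarrow>
           (let S = P \<inter> {x. x $ k = of_int b + of_nat l} in
              lattice_polytope S \<and> aff_dim S = int CARD('d) - 1 \<and>
              minkowski_equiv S B \<and> minkowski_equiv S T)"
proof (intro allI impI)
  fix l :: nat assume l: "l \<le> h"
  obtain Q :: "(real^'d) set" and j :: 'd and f where Q: "polytope Q" "aff_dim Q = int CARD('d) - 1"
    "Q \<subseteq> {x. x $ j = 0}" and iso: "bij_betw f {F. F face_of P} {G. G face_of std_prism Q j}"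
    "\<forall>F F'. F face_of P \<longrightarrow> F' face_of P \<longrightarrow> (F \<subseteq> F' \<longleftrightarrow> f F \<subseteq> f F')"
    and BT: "B face_of P" "T face_of P" "f B = Q" "f T = axis_shift j Q"
    using assms(2) unfolding prismatoid_def axis_shift_def by blast
  have "Q \<noteq> {}" using Q(2) by auto
  with Q iso BT assms interpret smooth_slab_prismatoid P Q j f B T k "of_int b" "of_nat h"
    by unfold_locales (auto simp: prismatoid_def)
  define t where "t = real l / real h"
  have t: "0 \<le> t" "t \<le> 1" using l assms(5) by (auto simp: t_def)
  have "P \<inter> {x. x $ k = of_int b + of_nat l} = minkowski_mix t B T"
    using slice_eq_minkowski_mix[OF t] assms(5) by (simp add: t_def)
  then show "let S = P \<inter> {x. x $ k = of_int b + of_nat l} in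
      lattice_polytope S \<and> aff_dim S = int CARD('d) - 1 \<and> minkowski_equiv S B \<and> minkowski_equiv S T"
    using lattice_polytope_minkowski_mix[OF refl l] aff_dim_minkowski_mix[OF t]
      normal_fan_minkowski_mix[OF t] normal_fan_T_eq_B
    by (simp add: Let_def minkowski_equiv_def t_def)
qed

end
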